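(* If $C$ is a projective linear code of length $n$ over $\mathbb{Z}_4$ of type $4^{k_1}2^{k_2}$, then $n\le 2^{2k_1+k_2-1}-2^{k_1+k_2-1}$.
   Context: A linear code of length $n$ over $\mathbb{Z}_4$ is a $\mathbb{Z}_4$-submodule of $\mathbb{Z}_4^n$, of type $4^{k_1}2^{k_2}$ if isomorphic to $\mathbb{Z}_4^{k_1}\times\mathbb{Z}_2^{k_2}$. Lee weight: $w_L(0)=0,w_L(1)=1,w_L(2)=2,w_L(3)=1$, additive on vectors. $C$ is projective if its dual $C^\perp=\{\mathbf{x}:\sum x_iy_i=0\in\mathbb{Z}_4\ \forall\mathbf{y}\in C\}$ has minimum nonzero Lee weight at least $3$. *)

theory Defs
  imports Main "HOL-Library.Numeral_Type"
begin

text \<open>Z4 is the library type 4 (integers mod 4); Z2 is the type 2.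
  A vector of length n over Z4 is a function nat => 4 vanishing outside {0..<n}.\<close>

definition vecs4 :: "nat \<Rightarrow> (nat \<Rightarrow> 4) set" where
  "vecs4 n = {x. \<forall>i\<ge>n. x i = 0}"

definition z4_linear_code :: "nat \<Rightarrow> (nat \<Rightarrow> 4) set \<Rightarrow> bool" where
  "z4_linear_code n C \<longleftrightarrow> C \<subseteq> vecs4 n \<and> (\<lambda>i. 0) \<in> C \<and>
     (\<forall>x\<in>C. \<forall>y\<in>C. (\<lambda>i. x i + y i) \<in> C) \<and>
     (\<forall>c::4. \<forall>x\<in>C. (\<lambda>i. c * x i) \<in> C)"

definition z4z2_group :: "nat \<Rightarrow> nat \<Rightarrow> ((nat \<Rightarrow> 4) \<times> (nat \<Rightarrow> 2)) set" where
  "z4z2_group k1 k2 = {(a, b). (\<forall>i\<ge>k1. a i = 0) \<and> (\<forall>i\<ge>k2. b i = 0)}"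

definition code_type :: "(nat \<Rightarrow> 4) set \<Rightarrow> nat \<Rightarrow> nat \<Rightarrow> bool" where
  "code_type C k1 k2 \<longleftrightarrow> (\<exists>f. bij_betw f C (z4z2_group k1 k2) \<and>
     (\<forall>x\<in>C. \<forall>y\<in>C. f (\<lambda>i. x i + y i) =
        ((\<lambda>i. fst (f x) i + fst (f y) i), (\<lambda>i. snd (f x) i + snd (f y) i))))"

definition lee_weight4 :: "4 \<Rightarrow> nat" where
  "lee_weight4 a = (if a = 0 then 0 else if a = 2 then 2 else 1)"

definition lee_weight :: "nat \<Rightarrow> (nat \<Rightarrow> 4) \<Rightarrow> nat" where
  "lee_weight n x = (\<Sum>i<n. lee_weight4 (x i))"

definition dual_code :: "nat \<Rightarrow> (nat \<Rightarrow> 4) set \<Rightarrow> (nat \<Rightarrow> 4) set" where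
  "dual_code n C = {x \<in> vecs4 n. \<forall>y\<in>C. (\<Sum>i<n. x i * y i) = 0}"

definition projective_code :: "nat \<Rightarrow> (nat \<Rightarrow> 4) set \<Rightarrow> bool" where
  "projective_code n C \<longleftrightarrow> (\<forall>x\<in>dual_code n C. x \<noteq> (\<lambda>i. 0) \<longrightarrow> lee_weight n x \<ge> 3)"

end

(* Let g : Z4^k1 x Z2^k2 -> C invert the isomorphism given by the type of C.  Coordinate i of
   the code is the homomorphism chi_i = (p |-> g p i) into Z4, determined by its values on the
   standard generators.  The dual word 2 e_i has Lee weight 2, so projectivity forces 2 chi_i /= 0;
   the dual words e_i -+ e_j force chi_i /= +-chi_j for i /= j.  Hence the 2n homomorphisms +-chi_i
   are distinct homomorphisms of order 4, of which there are (4^k1 - 2^k1) 2^k2. *)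

theory Submission
  imports Defs "HOL-Library.FuncSet" "HOL-Library.Function_Algebras" "HOL-Library.Product_Plus"
begin

lemma UNIV_4: "(UNIV :: 4 set) = {0, 1, 2, 3}"
  by (rule sym, rule card_subset_eq) (auto simp: card_insert_if)

lemma UNIV_2: "(UNIV :: 2 set) = {0, 1}"
  by (rule sym, rule card_subset_eq) (auto simp: card_insert_if)

lemma z4_cases [case_names 0 1 2 3]:
  fixes x :: 4
  obtains "x = 0" | "x = 1" | "x = 2" | "x = 3"
  using UNIV_4 by (metis UNIV_I empty_iff insert_iff)

lemma z2_cases [case_names 0 1]:
  fixes x :: 2
  obtains "x = 0" | "x = 1"
  using UNIV_2 by (metis UNIV_I empty_iff insert_iff)

lemma z4_double_eq_zero_iff: "2 * x = 0 \<longleftrightarrow> x \<in> {0, 2 :: 4}"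
  by (cases x rule: z4_cases) simp_all

lemma z4_uminus_eq_self_iff: "- x = x \<longleftrightarrow> x \<in> {0, 2 :: 4}"
  by (cases x rule: z4_cases) simp_all

lemma z4_uminus_mem_iff: "- x \<in> {0, 2} \<longleftrightarrow> x \<in> {0, 2 :: 4}"
  by (cases x rule: z4_cases) simp_all

definition vec_set :: "nat \<Rightarrow> 'a::zero set \<Rightarrow> (nat \<Rightarrow> 'a) set" where
  "vec_set k B = {b. (\<forall>j\<ge>k. b j = 0) \<and> (\<forall>j<k. b j \<in> B)}"

lemma bij_betw_restrict_vec_set:
  "bij_betw (\<lambda>b. restrict b {..<k}) (vec_set k B) (PiE {..<k} (\<lambda>_. B))"
proof (rule bij_betwI[where g = "\<lambda>p j. if j < k then p j else 0"])
  show "(\<lambda>b. restrict b {..<k}) \<in> vec_set k B \<rightarrow> PiE {..<k} (\<lambda>_. B)"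
    by (auto simp: vec_set_def)
  show "(\<lambda>p j. if j < k then p j else 0) \<in> PiE {..<k} (\<lambda>_. B) \<rightarrow> vec_set k B"
    by (auto simp: vec_set_def PiE_iff)
  show "(\<lambda>j. if j < k then restrict b {..<k} j else 0) = b" if "b \<in> vec_set k B" for b
    using that by (auto simp: vec_set_def fun_eq_iff not_less)
  show "restrict (\<lambda>j. if j < k then p j else 0) {..<k} = p" if "p \<in> PiE {..<k} (\<lambda>_. B)" for p
    using that by (auto simp: PiE_iff extensional_def fun_eq_iff)
qed

lemma finite_vec_set: "finite B \<Longrightarrow> finite (vec_set k B)"
  using bij_betw_finite[OF bij_betw_restrict_vec_set[of k B]] by (simp add: finite_PiE)

lemma card_vec_set: "finite B \<Longrightarrow> card (vec_set k B) = card B ^ k"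
  using bij_betw_same_card[OF bij_betw_restrict_vec_set] by (simp add: card_PiE)

text \<open>The homomorphisms \<open>Z4^k1 \<times> Z2^k2 \<rightarrow> Z4\<close> of order 4, encoded by their values on the
  standard generators (the generators of order 2 are sent into \<open>{0, 2}\<close>).\<close>
definition key_space :: "nat \<Rightarrow> nat \<Rightarrow> ((nat \<Rightarrow> 4) \<times> (nat \<Rightarrow> 4)) set" where
  "key_space k1 k2 = (vec_set k1 UNIV - vec_set k1 {0, 2}) \<times> vec_set k2 {0, 2}"

lemma finite_key_space: "finite (key_space k1 k2)"
  by (simp add: key_space_def finite_vec_set)

lemma card_key_space: "card (key_space k1 k2) = (4 ^ k1 - 2 ^ k1) * 2 ^ k2"
proof -
  have card_all: "card (vec_set k (UNIV :: 4 set)) = 4 ^ k" for k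
    by (simp add: card_vec_set)
  have card_even: "card (vec_set k {0, 2 :: 4}) = 2 ^ k" for k
    by (simp add: card_vec_set numeral_2_eq_2)
  have "vec_set k1 {0, 2} \<subseteq> vec_set k1 (UNIV :: 4 set)"
    by (auto simp: vec_set_def)
  then have "card (vec_set k1 UNIV - vec_set k1 {0, 2 :: 4}) = 4 ^ k1 - 2 ^ k1"
    by (simp add: card_Diff_subset finite_vec_set card_all card_even)
  then show ?thesis
    by (simp add: key_space_def card_cartesian_product card_even)
qed

lemma uminus_key_space: "p \<in> key_space k1 k2 \<Longrightarrow> - p \<in> key_space k1 k2"
  by (auto simp: key_space_def vec_set_def z4_uminus_mem_iff simp del: insert_iff)

lemma uminus_key_space_neq: "p \<in> key_space k1 k2 \<Longrightarrow> - p \<noteq> p"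
  by (auto simp: key_space_def vec_set_def fun_eq_iff prod_eq_iff z4_uminus_eq_self_iff
      simp del: insert_iff)

lemma double_card_le_if_disjoint_uminus:
  fixes S T :: "'a::group_add set"
  assumes "finite S" "T \<subseteq> S" "uminus ` T \<subseteq> S" "T \<inter> uminus ` T = {}"
  shows "2 * card T \<le> card S"
proof -
  have "finite T" using assms(1,2) by (rule finite_subset[rotated])
  have "2 * card T = card T + card (uminus ` T)"
    by (simp add: card_image inj_on_def)
  also have "\<dots> = card (T \<union> uminus ` T)"
    using \<open>finite T\<close> assms(4) by (simp add: card_Un_disjoint)
  also have "\<dots> \<le> card S"
    using assms(1-3) by (intro card_mono) auto
  finally show ?thesis .
qed

lemma four_pow_diff_two_pow_eq:
  "(4 ^ k1 - 2 ^ k1) * 2 ^ k2 = 2 * (2 ^ (2 * k1 + k2 - 1) - 2 ^ (k1 + k2 - 1) :: nat)"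
proof (cases k1)
  case (Suc m)
  have "(4 ^ k1 - 2 ^ k1) * 2 ^ k2 = (2 ^ (2 * k1 + k2) - 2 ^ (k1 + k2) :: nat)"
    by (simp add: diff_mult_distrib power_add power_mult)
  also have "\<dots> = 2 * (2 ^ (2 * k1 + k2 - 1) - 2 ^ (k1 + k2 - 1))"
    using Suc by (simp add: diff_mult_distrib2)
  finally show ?thesis .
qed simp

abbreviation gen4 :: "nat \<Rightarrow> (nat \<Rightarrow> 4) \<times> (nat \<Rightarrow> 2)" where
  "gen4 l \<equiv> (0(l := 1), 0)"

abbreviation gen2 :: "nat \<Rightarrow> (nat \<Rightarrow> 4) \<times> (nat \<Rightarrow> 2)" where
  "gen2 l \<equiv> (0, 0(l := 1))"

lemma z4z2_group_add: "p \<in> z4z2_group k1 k2 \<Longrightarrow> q \<in> z4z2_group k1 k2 \<Longrightarrow> p + q \<in> z4z2_group k1 k2"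
  by (auto simp: z4z2_group_def)

lemma zero_z4z2_group: "0 \<in> z4z2_group k1 k2"
  by (simp add: z4z2_group_def zero_prod_def)

lemma add_closed_gen4_multiples:
  assumes zero: "P 0"
    and add: "\<And>p q. P p \<Longrightarrow> P q \<Longrightarrow> P (p + q)"
    and gen4: "P (gen4 l)"
  shows "P (0(l := c), 0)"
proof (cases c rule: z4_cases)
  case 0
  then have "(0(l := c), 0) = (0 :: (nat \<Rightarrow> 4) \<times> (nat \<Rightarrow> 2))"
    by (simp add: zero_prod_def fun_eq_iff)
  then show ?thesis using zero by simp
next
  case 1
  then show ?thesis using gen4 by simp
next
  case 2
  then have "(0(l := c), 0) = gen4 l + gen4 l"
    by (simp add: fun_eq_iff)
  then show ?thesis by (simp only:) (intro add gen4)
next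
  case 3
  then have "(0(l := c), 0) = gen4 l + gen4 l + gen4 l"
    by (simp add: fun_eq_iff)
  then show ?thesis by (simp only:) (intro add gen4)
qed

lemma gen2_multiples:
  assumes zero: "P 0" and gen2: "P (gen2 l)"
  shows "P (0, 0(l := c))"
proof (cases c rule: z2_cases)
  case 0
  then have "(0, 0(l := c)) = (0 :: (nat \<Rightarrow> 4) \<times> (nat \<Rightarrow> 2))"
    by (simp add: zero_prod_def fun_eq_iff)
  then show ?thesis using zero by simp
next
  case 1
  then show ?thesis using gen2 by simp
qed

lemma z4z2_group_induct [consumes 1, case_names zero add gen4 gen2]:
  assumes "p \<in> z4z2_group k1 k2"
    and zero: "P 0"
    and add: "\<And>p q. P p \<Longrightarrow> P q \<Longrightarrow> P (p + q)"
    and gen4: "\<And>l. l < k1 \<Longrightarrow> P (gen4 l)"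
    and gen2: "\<And>l. l < k2 \<Longrightarrow> P (gen2 l)"
  shows "P p"
proof -
  have snd_zero: "P (a, 0)" if "\<forall>i\<ge>m. a i = 0" "m \<le> k1" for a m
    using that
  proof (induction m arbitrary: a)
    case 0
    then have "a = 0" by (simp add: fun_eq_iff)
    then show ?case using zero by (simp only: zero_prod_def)
  next
    case (Suc m)
    have "P (a(m := 0), 0)"
      using Suc.prems by (intro Suc.IH) auto
    moreover have "P (0(m := a m), 0)"
      using Suc.prems add_closed_gen4_multiples[of P, OF zero add gen4] by simp
    moreover have "(a, 0) = (a(m := 0), 0) + (0(m := a m), 0 :: nat \<Rightarrow> 2)"
      by (simp add: fun_eq_iff)
    ultimately show ?case by (simp only:) (rule add)
  qed
  have any_pair: "P (a, b)" if "\<forall>i\<ge>k1. a i = 0" "\<forall>i\<ge>m. b i = 0" "m \<le> k2" for a b m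
    using that(2,3)
  proof (induction m arbitrary: b)
    case 0
    then have "b = 0" by (simp add: fun_eq_iff)
    then show ?case using snd_zero[OF that(1) order_refl] by (simp only:)
  next
    case (Suc m)
    have "P (a, b(m := 0))"
      using Suc.prems by (intro Suc.IH) auto
    moreover have "P (0, 0(m := b m))"
      using Suc.prems gen2_multiples[of P, OF zero gen2] by simp
    moreover have "(a, b) = (a, b(m := 0)) + (0, 0(m := b m))"
      by (simp add: fun_eq_iff)
    ultimately show ?case by (simp only:) (rule add)
  qed
  obtain a b where "p = (a, b)" "\<forall>i\<ge>k1. a i = 0" "\<forall>i\<ge>k2. b i = 0"
    using assms(1) by (auto simp: z4z2_group_def)
  then show ?thesis using any_pair[of a k2 b] by simp
qed

locale code_parametrization =
  fixes k1 k2 :: nat and C :: "(nat \<Rightarrow> 4) set"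
    and g :: "(nat \<Rightarrow> 4) \<times> (nat \<Rightarrow> 2) \<Rightarrow> nat \<Rightarrow> 4"
  assumes bij: "bij_betw g (z4z2_group k1 k2) C"
    and additive: "\<And>p q. p \<in> z4z2_group k1 k2 \<Longrightarrow> q \<in> z4z2_group k1 k2 \<Longrightarrow> g (p + q) = g p + g q"
begin

lemma g_zero: "g 0 = 0"
proof -
  have "g 0 = g 0 + g 0"
    using additive[OF zero_z4z2_group zero_z4z2_group] by (simp only: add_0)
  then show ?thesis
    by (simp only: add_cancel_right_right)
qed

lemma double_g_gen2:
  assumes "l < k2"
  shows "2 * g (gen2 l) i = 0"
proof -
  have gen2: "gen2 l \<in> z4z2_group k1 k2"
    using assms by (simp add: z4z2_group_def)
  have "gen2 l + gen2 l = 0"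
    by (simp add: zero_prod_def fun_eq_iff)
  then have "g (gen2 l) + g (gen2 l) = 0"
    by (simp only: additive[OF gen2 gen2, symmetric] g_zero)
  from fun_cong[OF this, of i] show ?thesis
    \<comment> \<open>\<open>simp add: mult_2\<close> does not terminate here\<close>
    by (metis mult_2 plus_fun_apply zero_fun_apply)
qed

lemma additive_functional_vanishes:
  fixes L :: "(nat \<Rightarrow> 4) \<Rightarrow> 4"
  assumes L_add: "\<And>x y. L (x + y) = L x + L y"
    and L_gen4: "\<And>l. l < k1 \<Longrightarrow> L (g (gen4 l)) = 0"
    and L_gen2: "\<And>l. l < k2 \<Longrightarrow> L (g (gen2 l)) = 0"
    and "c \<in> C"
  shows "L c = 0"
proof -
  obtain p where p: "p \<in> z4z2_group k1 k2" "c = g p"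
    using bij \<open>c \<in> C\<close> by (auto simp: bij_betw_def)
  have "p \<in> z4z2_group k1 k2 \<and> L (g p) = 0"
    using p(1)
  proof (induction rule: z4z2_group_induct)
    case zero
    have "L 0 = 0"
      using L_add[of 0 0] by simp
    then show ?case
      using g_zero zero_z4z2_group by metis
  next
    case (add p q)
    then have G: "p \<in> z4z2_group k1 k2" "q \<in> z4z2_group k1 k2"
      and L_zero: "L (g p) = 0" "L (g q) = 0" by simp_all
    have "L (g (p + q)) = L (g p) + L (g q)"
      by (simp only: additive[OF G] L_add)
    with G L_zero show ?case
      by (simp add: z4z2_group_add)
  next
    case (gen4 l)
    then show ?case using L_gen4 by (simp add: z4z2_group_def)
  next
    case (gen2 l)
    then show ?case using L_gen2 by (simp add: z4z2_group_def)
  qed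
  with p show ?thesis by simp
qed

definition column_key :: "nat \<Rightarrow> (nat \<Rightarrow> 4) \<times> (nat \<Rightarrow> 4)" where
  "column_key i = ((\<lambda>l. if l < k1 then g (gen4 l) i else 0), (\<lambda>l. if l < k2 then g (gen2 l) i else 0))"

end

lemma code_type_parametrization:
  assumes "z4_linear_code n C" and "code_type C k1 k2"
  obtains g where "code_parametrization k1 k2 C g"
proof -
  obtain f where f_bij: "bij_betw f C (z4z2_group k1 k2)"
    and f_hom: "\<forall>x\<in>C. \<forall>y\<in>C. f (\<lambda>i. x i + y i) =
        ((\<lambda>i. fst (f x) i + fst (f y) i), (\<lambda>i. snd (f x) i + snd (f y) i))"
    using assms(2) unfolding code_type_def by blast
  have f_add: "f (x + y) = f x + f y" if "x \<in> C" "y \<in> C" for x y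
    using f_hom that by (simp add: plus_fun_def plus_prod_def)
  have C_add: "x + y \<in> C" if "x \<in> C" "y \<in> C" for x y
    using assms(1) that by (simp add: z4_linear_code_def plus_fun_def)
  define g where "g = inv_into C f"
  have g_bij: "bij_betw g (z4z2_group k1 k2) C"
    unfolding g_def using f_bij by (rule bij_betw_inv_into)
  have g_add: "g (p + q) = g p + g q" if "p \<in> z4z2_group k1 k2" "q \<in> z4z2_group k1 k2" for p q
  proof -
    have gp: "g p \<in> C" and gq: "g q \<in> C"
      using g_bij that by (simp_all add: bij_betw_apply)
    have "f (g p) = p" "f (g q) = q"
      unfolding g_def using bij_betw_inv_into_right[OF f_bij] that by simp_all
    then have "f (g p + g q) = p + q"
      by (simp only: f_add[OF gp gq])
    then have "g (p + q) = g (f (g p + g q))"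
      by (simp only:)
    also have "\<dots> = g p + g q"
      using bij_betw_inv_into_left[OF f_bij C_add[OF gp gq]] by (simp only: g_def)
    finally show ?thesis .
  qed
  show ?thesis
    by (rule that, rule code_parametrization.intro[OF g_bij g_add])
qed

lemma projective_codeD:
  assumes "projective_code n C" "x \<in> vecs4 n" "x \<noteq> 0" "lee_weight n x < 3"
  shows "\<exists>y\<in>C. (\<Sum>l<n. x l * y l) \<noteq> 0"
  using assms by (auto simp: projective_code_def dual_code_def zero_fun_def)

lemma projective_code_ex_double_nonzero:
  assumes "projective_code n C" "i < n"
  shows "\<exists>y\<in>C. 2 * y i \<noteq> 0"
proof -
  let ?x = "(0 :: nat \<Rightarrow> 4)(i := 2)"
  have "?x \<in> vecs4 n"
    using assms(2) by (simp add: vecs4_def)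
  moreover have "?x i \<noteq> 0"
    by simp
  then have "?x \<noteq> 0"
    by (metis zero_fun_apply)
  moreover have "lee_weight4 (?x l) = (if l = i then 2 else 0)" for l
    by (simp add: lee_weight4_def)
  then have "lee_weight n ?x < 3"
    using assms(2) by (simp add: lee_weight_def)
  ultimately obtain y where "y \<in> C" "(\<Sum>l<n. ?x l * y l) \<noteq> 0"
    using projective_codeD[OF assms(1)] by blast
  moreover have "?x l * y l = (if l = i then 2 * y i else 0)" for l
    by simp
  then have "(\<Sum>l<n. ?x l * y l) = 2 * y i"
    using assms(2) by simp
  ultimately show ?thesis by auto
qed

lemma projective_code_coordinates_not_associated:
  assumes "projective_code n C" "i < n" "j < n" "i \<noteq> j" "u = 1 \<or> u = -1"
  shows "\<exists>y\<in>C. y i \<noteq> u * y j"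
proof -
  let ?x = "(0 :: nat \<Rightarrow> 4)(i := 1, j := - u)"
  have "?x \<in> vecs4 n"
    using assms(2,3) by (simp add: vecs4_def)
  moreover have "?x i \<noteq> 0"
    using assms(4) by simp
  then have "?x \<noteq> 0"
    by (metis zero_fun_apply)
  moreover have "lee_weight4 (?x l) = (if l = i then 1 else 0) + (if l = j then 1 else 0)" for l
    using assms(4,5) by (auto simp: lee_weight4_def)
  then have "lee_weight n ?x < 3"
    using assms(2-4) by (simp add: lee_weight_def sum.distrib)
  ultimately obtain y where "y \<in> C" "(\<Sum>l<n. ?x l * y l) \<noteq> 0"
    using projective_codeD[OF assms(1)] by blast
  moreover have "?x l * y l = (if l = i then y i else 0) + (if l = j then - u * y j else 0)" for l
    using assms(4) by simp
  then have "(\<Sum>l<n. ?x l * y l) = y i - u * y j"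
    using assms(2-4) by (simp add: sum.distrib)
  ultimately show ?thesis by auto
qed

locale projective_code_parametrization = code_parametrization +
  fixes n :: nat
  assumes projective: "projective_code n C"
begin

lemma column_key_in_key_space:
  assumes "i < n"
  shows "column_key i \<in> key_space k1 k2"
proof -
  have "g (gen2 l) i \<in> {0, 2}" if "l < k2" for l
    using double_g_gen2[OF that] z4_double_eq_zero_iff by blast
  then have "snd (column_key i) \<in> vec_set k2 {0, 2}"
    by (simp add: column_key_def vec_set_def)
  moreover have "fst (column_key i) \<notin> vec_set k1 {0, 2}"
  proof
    assume "fst (column_key i) \<in> vec_set k1 {0, 2}"
    then have "g (gen4 l) i \<in> {0, 2}" if "l < k1" for l
      using that by (simp add: column_key_def vec_set_def)
    then have gen4: "2 * g (gen4 l) i = 0" if "l < k1" for l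
      using that z4_double_eq_zero_iff by blast
    have "2 * y i = 0" if "y \<in> C" for y
      by (rule additive_functional_vanishes[where L = "\<lambda>x. 2 * x i"])
        (simp_all add: distrib_left gen4 double_g_gen2 that)
    then show False
      using projective_code_ex_double_nonzero[OF projective assms] by blast
  qed
  moreover have "fst (column_key i) \<in> vec_set k1 UNIV"
    by (simp add: column_key_def vec_set_def)
  ultimately show ?thesis
    by (simp add: key_space_def mem_Times_iff)
qed

lemma column_key_inj_up_to_sign:
  assumes "i < n" "j < n"
    and "column_key i = column_key j \<or> column_key i = - column_key j"
  shows "i = j"
proof (rule ccontr)
  assume "i \<noteq> j"
  obtain u :: 4 where u: "u = 1 \<or> u = -1"
    and key: "\<And>l. fst (column_key i) l = u * fst (column_key j) l"
      "\<And>l. snd (column_key i) l = u * snd (column_key j) l"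
  proof (cases "column_key i = column_key j")
    case True
    then show ?thesis by (intro that[of 1]) simp_all
  next
    case False
    with assms(3) show ?thesis by (intro that[of "-1"]) simp_all
  qed
  have "y i - u * y j = 0" if "y \<in> C" for y
  proof (rule additive_functional_vanishes[where L = "\<lambda>x. x i - u * x j"])
    show "(x + y) i - u * (x + y) j = (x i - u * x j) + (y i - u * y j)" for x y :: "nat \<Rightarrow> 4"
      by (simp add: algebra_simps)
    show "g (gen4 l) i - u * g (gen4 l) j = 0" if "l < k1" for l
      using key(1)[of l] that by (simp add: column_key_def)
    show "g (gen2 l) i - u * g (gen2 l) j = 0" if "l < k2" for l
      using key(2)[of l] that by (simp add: column_key_def)
  qed (rule that)
  then show False
    using projective_code_coordinates_not_associated[OF projective assms(1,2) \<open>i \<noteq> j\<close> u] by simp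
qed

lemma double_length_le_card_key_space: "2 * n \<le> card (key_space k1 k2)"
proof -
  let ?T = "column_key ` {..<n}"
  have "inj_on column_key {..<n}"
    by (rule inj_onI) (use column_key_inj_up_to_sign in blast)
  then have "card ?T = n"
    by (simp add: card_image)
  moreover have "2 * card ?T \<le> card (key_space k1 k2)"
  proof (rule double_card_le_if_disjoint_uminus)
    show "?T \<subseteq> key_space k1 k2"
      using column_key_in_key_space by blast
    then show "uminus ` ?T \<subseteq> key_space k1 k2"
      using uminus_key_space by blast
    show "?T \<inter> uminus ` ?T = {}"
    proof (rule ccontr)
      assume "?T \<inter> uminus ` ?T \<noteq> {}"
      then obtain i j where ij: "i < n" "j < n" and eq: "column_key i = - column_key j"
        by blast
      then have "i = j" using column_key_inj_up_to_sign by blast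
      with eq have "- column_key i = column_key i" by simp
      then show False
        using uminus_key_space_neq column_key_in_key_space ij(1) by blast
    qed
  qed (rule finite_key_space)
  ultimately show ?thesis by simp
qed

end

theorem proposition4p2:
  fixes n k1 k2 :: nat and C :: "(nat \<Rightarrow> 4) set"
  assumes "z4_linear_code n C"
    and "code_type C k1 k2"
    and "projective_code n C"
  shows "n \<le> 2 ^ (2 * k1 + k2 - 1) - 2 ^ (k1 + k2 - 1)"
proof -
  obtain g where "code_parametrization k1 k2 C g"
    using assms(1,2) by (rule code_type_parametrization)
  then interpret projective_code_parametrization k1 k2 C g n
    using assms(3) by (intro projective_code_parametrization.intro projective_code_parametrization_axioms.intro)
  have "2 * n \<le> (4 ^ k1 - 2 ^ k1) * 2 ^ k2"
    using double_length_le_card_key_space by (simp add: card_key_space)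
  then show ?thesis
    by (simp add: four_pow_diff_two_pow_eq)
qed

end
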